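(* Let $R$ and $Q$ be rod sets. (a) There exist a rod set $R'\equiv R$ and an expansion subtree $\mathsf T$ of $\mathrm{Tree}(R')$ with $\langle\mathrm{Inner}(\mathsf T)\rangle\equiv Q$. (b) For any rod set $R'\equiv R$ and any expansion subtree $\mathsf T$ of $\mathrm{Tree}(R')$ with $\langle\mathrm{Inner}(\mathsf T)\rangle\equiv Q$, one has $$\langle\mathrm{Leaves}(\mathsf T)\rangle\equiv R\cup\overline{Q}\cup QR .$$
   Context: A rod is a triple $(r,c,\varepsilon)$ with $r$ a positive integer (length), $c$ a tag (color) and $\varepsilon\in\{\pm1\}$ (sign); rods of sign $-1$ are antirods. A rod set is a set of rods with finitely many rods of each length. $C(n,R)$ is the number of positive rods of length $n$ in $R$ minus the number of antirods of length $n$. Rod sets $R,S$ are equivalent, $R\equiv S$, if $C(n,R)=C(n,S)$ for all $n>0$ (equivalently, one is obtained from the other by adding/deleting pairs consisting of a rod and an antirod of the same length). Unions of rod sets are disjoint (multiset) unions; $\overline{Q}$ is $Q$ with all signs reversed; the concatenation $QR$ is the rod set with one rod for each pair $(q,r)\in Q\times R$, of length $\operatorname{len}(q)+\operatorname{len}(r)$ and sign $\operatorname{sign}(q)\operatorname{sign}(r)$. A train built from $R$ is a finite sequence of rods of $R$ (the empty train is $\Lambda$), with length the sum of lengths and sign the product of signs; for a set $X$ of trains, $\langle X\rangle$ is the rod set with one rod, of the same length and sign, for each nonempty train in $X$. $\mathrm{Tree}(R)$ is the rooted tree with nodes the trains built from $R$, root $\Lambda$, and children of $\tau$ the trains $\tau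 k$, $k\in R$ (one per rod). An expansion subtree $\mathsf T$ is a rooted subtree containing all children of the root, and containing all children of any node of which it contains at least one child; $\mathrm{Inner}(\mathsf T)$ is the set of non-root nodes with children in $\mathsf T$, $\mathrm{Leaves}(\mathsf T)$ the set of nodes of $\mathsf T$ without children in $\mathsf T$. *)

theory Defs
  imports Main
begin

type_synonym 'c rod = "nat \<times> 'c \<times> int"

definition rlen :: "'c rod \<Rightarrow> nat" where "rlen k = fst k"
definition rcol :: "'c rod \<Rightarrow> 'c" where "rcol k = fst (snd k)"
definition rsign :: "'c rod \<Rightarrow> int" where "rsign k = snd (snd k)"

definition rodset :: "'c rod set \<Rightarrow> bool" where
  "rodset R \<longleftrightarrow> (\<forall>k\<in>R. rlen k > 0 \<and> (rsign k = 1 \<or> rsign k = -1))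
      \<and> (\<forall>n. finite {k\<in>R. rlen k = n})"

definition Ccount :: "nat \<Rightarrow> 'c rod set \<Rightarrow> int" where
  "Ccount n R = int (card {k\<in>R. rlen k = n \<and> rsign k = 1})
              - int (card {k\<in>R. rlen k = n \<and> rsign k = -1})"

definition rod_equiv :: "'c rod set \<Rightarrow> 'd rod set \<Rightarrow> bool" (infix "\<equiv>\<^sub>r" 50) where
  "R \<equiv>\<^sub>r S \<longleftrightarrow> (\<forall>n>0. Ccount n R = Ccount n S)"

text \<open>Disjoint union: colours are tagged to keep the union disjoint.\<close>
definition runion :: "'c rod set \<Rightarrow> 'd rod set \<Rightarrow> ('c + 'd) rod set" where
  "runion A B = {(l, Inl c, s) | l c s. (l, c, s) \<in> A} \<union> {(l, Inr c, s) | l c s. (l, c, s) \<in> B}"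

definition rbar :: "'c rod set \<Rightarrow> 'c rod set" where
  "rbar Q = {(l, c, - s) | l c s. (l, c, s) \<in> Q}"

definition rconcat :: "'c rod set \<Rightarrow> 'd rod set \<Rightarrow> ('c rod \<times> 'd rod) rod set" where
  "rconcat Q R = {(rlen q + rlen r, (q, r), rsign q * rsign r) | q r. q \<in> Q \<and> r \<in> R}"

text \<open>Trains built from R are lists of rods of R.\<close>
definition train_len :: "'c rod list \<Rightarrow> nat" where
  "train_len t = (\<Sum>k\<leftarrow>t. rlen k)"
definition train_sign :: "'c rod list \<Rightarrow> int" where
  "train_sign t = (\<Prod>k\<leftarrow>t. rsign k)"

definition trains_rods :: "'c rod list set \<Rightarrow> ('c rod list) rod set" where
  "trains_rods X = {(train_len t, t, train_sign t) | t. t \<in> X \<and> t \<noteq> []}"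

text \<open>Tree(R): nodes are the trains in lists R, root [], children of t are t @ [k], k in R.\<close>
definition expansion_subtree :: "'c rod set \<Rightarrow> 'c rod list set \<Rightarrow> bool" where
  "expansion_subtree R T \<longleftrightarrow>
     T \<subseteq> lists R \<and> [] \<in> T
     \<and> (\<forall>t k. t @ [k] \<in> T \<longrightarrow> t \<in> T)
     \<and> (\<forall>k\<in>R. [k] \<in> T)
     \<and> (\<forall>t k k'. t @ [k] \<in> T \<and> k' \<in> R \<longrightarrow> t @ [k'] \<in> T)"

definition Inner :: "'c rod set \<Rightarrow> 'c rod list set \<Rightarrow> 'c rod list set" where
  "Inner R T = {t\<in>T. t \<noteq> [] \<and> (\<exists>k\<in>R. t @ [k] \<in> T)}"

definition Leaves :: "'c rod set \<Rightarrow> 'c rod list set \<Rightarrow> 'c rod list set" where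
  "Leaves R T = {t\<in>T. \<not> (\<exists>k\<in>R. t @ [k] \<in> T)}"

end

theory Submission
  imports Defs
begin

text \<open>
  Compare rod sets through their generating functions \<open>\<Sum>\<^sub>n C(n,X) x\<^sup>n\<close>, under which
  concatenation becomes multiplication. Every non-root node of an expansion subtree is either a
  leaf or an inner node, and it is either a child of the root or a child \<open>\<tau>k\<close> of an inner
  node \<open>\<tau>\<close>. Counting the non-root nodes both ways gives \<open>L + I = R' + I R'\<close> for the
  generating functions of leaves and inner nodes, so \<open>I \<equiv> Q\<close> and \<open>R' \<equiv> R\<close> give
  \<open>L = R - Q + Q R\<close>.
  For existence, take a copy of \<open>R\<close> together with a rod and an antirod for each rod of \<open>Q\<close>,
  which does not change the class of \<open>R\<close>, and expand exactly the rods of the copy of \<open>Q\<close>.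
\<close>

definition graded_sum :: "('a \<Rightarrow> nat) \<Rightarrow> ('a \<Rightarrow> int) \<Rightarrow> 'a set \<Rightarrow> nat \<Rightarrow> int" where
  "graded_sum len wt A n = (\<Sum>x\<in>{x\<in>A. len x = n}. wt x)"

lemma graded_sum_Un:
  assumes "finite {x\<in>A. len x = n}" "finite {x\<in>B. len x = n}" "A \<inter> B = {}"
  shows "graded_sum len wt (A \<union> B) n = graded_sum len wt A n + graded_sum len wt B n"
proof -
  have "{x\<in>A \<union> B. len x = n} = {x\<in>A. len x = n} \<union> {x\<in>B. len x = n}" by auto
  then show ?thesis
    unfolding graded_sum_def using assms by (simp add: sum.union_disjoint disjoint_iff)
qed

lemma graded_sum_image:
  assumes "inj_on f A"
  shows "graded_sum len wt (f ` A) n = graded_sum (len \<circ> f) (wt \<circ> f) A n"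
proof -
  have "{y\<in>f ` A. len y = n} = f ` {x\<in>A. len (f x) = n}" by auto
  then show ?thesis
    unfolding graded_sum_def by (simp add: sum.reindex inj_on_subset[OF assms])
qed

lemma graded_sum_Times:
  assumes "\<And>i. finite {a\<in>A. la a = i}" "\<And>j. finite {b\<in>B. lb b = j}"
  shows "graded_sum (\<lambda>p. la (fst p) + lb (snd p)) (\<lambda>p. wa (fst p) * wb (snd p)) (A \<times> B) n
       = (\<Sum>i\<le>n. graded_sum la wa A i * graded_sum lb wb B (n - i))"
proof -
  have fibre: "{p\<in>A \<times> B. la (fst p) + lb (snd p) = n}
      = (\<Union>i\<le>n. {a\<in>A. la a = i} \<times> {b\<in>B. lb b = n - i})" by auto
  have "graded_sum (\<lambda>p. la (fst p) + lb (snd p)) (\<lambda>p. wa (fst p) * wb (snd p)) (A \<times> B) n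
      = (\<Sum>i\<le>n. \<Sum>p\<in>{a\<in>A. la a = i} \<times> {b\<in>B. lb b = n - i}. wa (fst p) * wb (snd p))"
    unfolding graded_sum_def fibre using assms by (subst sum.UNION_disjoint) auto
  then show ?thesis
    by (simp add: graded_sum_def sum_product sum.cartesian_product split_def)
qed

abbreviation rod_count :: "'c rod set \<Rightarrow> nat \<Rightarrow> int" where
  "rod_count \<equiv> graded_sum rlen rsign"

abbreviation train_count :: "'c rod list set \<Rightarrow> nat \<Rightarrow> int" where
  "train_count \<equiv> graded_sum train_len train_sign"

lemma rod_simps [simp]: "rlen (l, c, s) = l" "rcol (l, c, s) = c" "rsign (l, c, s) = s"
  by (simp_all add: rlen_def rcol_def rsign_def)

lemma finite_rodset_fibre: "rodset A \<Longrightarrow> finite {k\<in>A. rlen k = n}"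
  unfolding rodset_def by blast

lemma Ccount_eq_rod_count:
  assumes "rodset A"
  shows "Ccount n A = rod_count A n"
proof -
  let ?P = "{k\<in>A. rlen k = n \<and> rsign k = 1}" and ?N = "{k\<in>A. rlen k = n \<and> rsign k = -1}"
  have fibre: "{k\<in>A. rlen k = n} = ?P \<union> ?N"
    using assms by (auto simp: rodset_def)
  have "finite ?P" "finite ?N"
    by (auto intro: finite_subset[OF _ finite_rodset_fibre[OF assms, of n]])
  then have "rod_count A n = (\<Sum>k\<in>?P. rsign k) + (\<Sum>k\<in>?N. rsign k)"
    unfolding graded_sum_def fibre by (rule sum.union_disjoint) auto
  also have "\<dots> = int (card ?P) - int (card ?N)"
    by (simp add: sum.cong[of ?P ?P rsign "\<lambda>_. 1"] sum.cong[of ?N ?N rsign "\<lambda>_. -1"])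
  finally show ?thesis by (simp add: Ccount_def)
qed

lemma rod_count_zero: "rodset A \<Longrightarrow> rod_count A 0 = 0"
  unfolding graded_sum_def rodset_def by (auto intro!: sum.neutral)

lemma rod_equiv_iff_rod_count:
  assumes "rodset A" "rodset B"
  shows "A \<equiv>\<^sub>r B \<longleftrightarrow> (\<forall>n. rod_count A n = rod_count B n)"
  using assms rod_count_zero unfolding rod_equiv_def Ccount_eq_rod_count[OF assms(1)]
    Ccount_eq_rod_count[OF assms(2)] by (metis not_gr0)

lemma rod_equivI:
  "rodset A \<Longrightarrow> rodset B \<Longrightarrow> (\<And>n. 0 < n \<Longrightarrow> rod_count A n = rod_count B n) \<Longrightarrow> A \<equiv>\<^sub>r B"
  by (simp add: rod_equiv_def Ccount_eq_rod_count)

lemma rodset_image: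
  assumes "\<And>n. finite {k\<in>A. rlen (f k) = n}"
    and "\<And>k. k \<in> A \<Longrightarrow> rlen (f k) > 0 \<and> (rsign (f k) = 1 \<or> rsign (f k) = -1)"
  shows "rodset (f ` A)"
proof -
  have "{k\<in>f ` A. rlen k = n} = f ` {k\<in>A. rlen (f k) = n}" for n by auto
  then show ?thesis using assms unfolding rodset_def by auto
qed

lemma rodset_image_rod:
  assumes "rodset A" and "\<And>k. k \<in> A \<Longrightarrow> rlen (f k) = rlen k"
    and "\<And>k. k \<in> A \<Longrightarrow> rsign (f k) = rsign k \<or> rsign (f k) = - rsign k"
  shows "rodset (f ` A)"
proof (rule rodset_image)
  show "finite {k\<in>A. rlen (f k) = n}" for n
    using finite_rodset_fibre[OF assms(1), of n] assms(2) by (simp cong: conj_cong)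
  show "rlen (f k) > 0 \<and> (rsign (f k) = 1 \<or> rsign (f k) = -1)" if "k \<in> A" for k
    using assms that unfolding rodset_def by fastforce
qed

lemma rodset_Un: "rodset A \<Longrightarrow> rodset B \<Longrightarrow> rodset (A \<union> B)"
  unfolding rodset_def by (auto simp: Collect_disj_eq conj_disj_distribR)

lemma rod_count_Un:
  "rodset A \<Longrightarrow> rodset B \<Longrightarrow> A \<inter> B = {} \<Longrightarrow> rod_count (A \<union> B) n = rod_count A n + rod_count B n"
  by (simp add: graded_sum_Un finite_rodset_fibre)

lemma runion_eq_image:
  "runion A B = (\<lambda>k. (rlen k, Inl (rcol k), rsign k)) ` A \<union> (\<lambda>k. (rlen k, Inr (rcol k), rsign k)) ` B"
  unfolding runion_def by (force simp: rlen_def rcol_def rsign_def)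

lemma
  assumes "rodset A" "rodset B"
  shows rodset_runion: "rodset (runion A B)"
    and rod_count_runion: "rod_count (runion A B) n = rod_count A n + rod_count B n"
proof -
  let ?l = "\<lambda>k. (rlen k, Inl (rcol k) :: _ + 'b, rsign k)"
    and ?r = "\<lambda>k. (rlen k, Inr (rcol k) :: 'a + _, rsign k)"
  have inj: "inj_on ?l A" "inj_on ?r B"
    by (auto simp: inj_on_def rlen_def rcol_def rsign_def prod_eq_iff)
  have rods: "rodset (?l ` A)" "rodset (?r ` B)"
    by (auto intro: rodset_image_rod assms)
  then show "rodset (runion A B)" unfolding runion_eq_image by (rule rodset_Un)
  have "rod_count (runion A B) n = rod_count (?l ` A) n + rod_count (?r ` B) n"
    unfolding runion_eq_image using rods by (rule rod_count_Un) force
  also have "\<dots> = rod_count A n + rod_count B n"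
    using inj by (simp add: graded_sum_image o_def)
  finally show "rod_count (runion A B) n = rod_count A n + rod_count B n" .
qed

lemma rbar_eq_image: "rbar A = (\<lambda>k. (rlen k, rcol k, - rsign k)) ` A"
  unfolding rbar_def by (force simp: rlen_def rcol_def rsign_def)

lemma
  assumes "rodset A"
  shows rodset_rbar: "rodset (rbar A)"
    and rod_count_rbar: "rod_count (rbar A) n = - rod_count A n"
proof -
  let ?f = "\<lambda>k. (rlen k, rcol k, - rsign k)"
  have inj: "inj_on ?f A" by (auto simp: inj_on_def rlen_def rcol_def rsign_def prod_eq_iff)
  show "rodset (rbar A)" unfolding rbar_eq_image by (auto intro: rodset_image_rod assms)
  show "rod_count (rbar A) n = - rod_count A n"
    unfolding rbar_eq_image using inj by (simp add: graded_sum_image o_def) (simp add: graded_sum_def sum_negf)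
qed

lemma rconcat_eq_image:
  "rconcat Q R = (\<lambda>p. (rlen (fst p) + rlen (snd p), p, rsign (fst p) * rsign (snd p))) ` (Q \<times> R)"
  unfolding rconcat_def by (auto simp: image_iff)

lemma
  assumes "rodset Q" "rodset R"
  shows rodset_rconcat: "rodset (rconcat Q R)"
    and rod_count_rconcat: "rod_count (rconcat Q R) n = (\<Sum>i\<le>n. rod_count Q i * rod_count R (n - i))"
proof -
  let ?f = "\<lambda>p. (rlen (fst p) + rlen (snd p), p, rsign (fst p) * rsign (snd p))"
  have inj: "inj_on ?f (Q \<times> R)" by (auto simp: inj_on_def)
  have fibres: "\<And>i. finite {q\<in>Q. rlen q = i}" "\<And>j. finite {r\<in>R. rlen r = j}"
    using assms by (simp_all add: finite_rodset_fibre)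
  show "rodset (rconcat Q R)" unfolding rconcat_eq_image
  proof (rule rodset_image)
    have "{p\<in>Q \<times> R. rlen (fst p) + rlen (snd p) = n}
        = (\<Union>i\<le>n. {q\<in>Q. rlen q = i} \<times> {r\<in>R. rlen r = n - i})" for n by auto
    then show "finite {p\<in>Q \<times> R. rlen (?f p) = n}" for n using fibres by simp
    show "rlen (?f p) > 0 \<and> (rsign (?f p) = 1 \<or> rsign (?f p) = -1)" if "p \<in> Q \<times> R" for p
    proof -
      have "rlen (fst p) > 0" "rsign (fst p) \<in> {1, -1}" "rsign (snd p) \<in> {1, -1}"
        using assms that unfolding rodset_def by auto
      then show ?thesis by auto
    qed
  qed
  show "rod_count (rconcat Q R) n = (\<Sum>i\<le>n. rod_count Q i * rod_count R (n - i))"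
    unfolding rconcat_eq_image using inj graded_sum_Times[OF fibres]
    by (simp add: graded_sum_image o_def)
qed

lemma train_len_simps [simp]:
  "train_len [] = 0" "train_len (t @ [k]) = train_len t + rlen k" "train_len [k] = rlen k"
  by (simp_all add: train_len_def)

lemma train_sign_simps [simp]:
  "train_sign [] = 1" "train_sign (t @ [k]) = train_sign t * rsign k" "train_sign [k] = rsign k"
  by (simp_all add: train_sign_def)

lemma train_len_ge:
  assumes "\<forall>k\<in>set t. rlen k > 0"
  shows "length t \<le> train_len t" and "k \<in> set t \<Longrightarrow> rlen k \<le> train_len t"
  using assms by (induction t) (auto simp: train_len_def)

lemma train_len_pos: "\<forall>k\<in>set t. rlen k > 0 \<Longrightarrow> t \<noteq> [] \<Longrightarrow> train_len t > 0"
  by (cases t) (auto simp: train_len_def)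

lemma train_sign_cases:
  "\<forall>k\<in>set t. rsign k = 1 \<or> rsign k = -1 \<Longrightarrow> train_sign t = 1 \<or> train_sign t = -1"
  by (induction t) (auto simp: train_sign_def)

lemma finite_trains_of_len:
  assumes "rodset R"
  shows "finite {t\<in>lists R. train_len t = n}"
proof -
  have "{k\<in>R. rlen k \<le> n} = (\<Union>m\<le>n. {k\<in>R. rlen k = m})" by auto
  then have "finite {k\<in>R. rlen k \<le> n}" using assms by (simp add: finite_rodset_fibre)
  moreover have "{t\<in>lists R. train_len t = n} \<subseteq> {t. set t \<subseteq> {k\<in>R. rlen k \<le> n} \<and> length t \<le> n}"
  proof
    fix t assume t: "t \<in> {t\<in>lists R. train_len t = n}"
    then have "\<forall>k\<in>set t. rlen k > 0" using assms by (auto simp: rodset_def)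
    with t show "t \<in> {t. set t \<subseteq> {k\<in>R. rlen k \<le> n} \<and> length t \<le> n}"
      using train_len_ge by auto
  qed
  ultimately show ?thesis using finite_lists_length_le finite_subset by blast
qed

lemma trains_rods_eq_image: "trains_rods X = (\<lambda>t. (train_len t, t, train_sign t)) ` (X - {[]})"
  unfolding trains_rods_def by auto

lemma rod_count_trains_rods: "rod_count (trains_rods X) n = train_count (X - {[]}) n"
  unfolding trains_rods_eq_image by (subst graded_sum_image) (auto simp: inj_on_def o_def)

lemma rodset_trains_rods:
  assumes "rodset R" and "X \<subseteq> lists R"
  shows "rodset (trains_rods X)"
  unfolding trains_rods_eq_image
proof (rule rodset_image)
  show "finite {t\<in>X - {[]}. rlen (train_len t, t, train_sign t) = n}" for n
    using assms by (auto intro: finite_subset[OF _ finite_trains_of_len[OF assms(1), of n]])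
  fix t assume t: "t \<in> X - {[]}"
  then have "\<forall>k\<in>set t. rlen k > 0" "\<forall>k\<in>set t. rsign k = 1 \<or> rsign k = -1"
    using assms unfolding rodset_def by auto
  with t show "rlen (train_len t, t, train_sign t) > 0
      \<and> (rsign (train_len t, t, train_sign t) = 1 \<or> rsign (train_len t, t, train_sign t) = -1)"
    using train_len_pos train_sign_cases by auto
qed

lemma nonroot_eq_leaves_Un_inner: "T - {[]} = (Leaves R T - {[]}) \<union> Inner R T"
  and leaves_inner_disjoint: "(Leaves R T - {[]}) \<inter> Inner R T = {}"
  unfolding Inner_def Leaves_def by auto

lemma expansion_subtree_nonroot_eq:
  assumes "expansion_subtree R T"
  shows "T - {[]} = (\<lambda>k. [k]) ` R \<union> (\<lambda>p. fst p @ [snd p]) ` (Inner R T \<times> R)"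
proof
  show "T - {[]} \<subseteq> (\<lambda>k. [k]) ` R \<union> (\<lambda>p. fst p @ [snd p]) ` (Inner R T \<times> R)"
  proof
    fix t assume t: "t \<in> T - {[]}"
    then obtain s k where t_eq: "t = s @ [k]" by (metis DiffD2 insertI1 rev_exhaust)
    have "s \<in> T" and "t \<in> lists R"
      using assms t unfolding expansion_subtree_def t_eq by blast+
    then have "k \<in> R" by (simp add: t_eq)
    show "t \<in> (\<lambda>k. [k]) ` R \<union> (\<lambda>p. fst p @ [snd p]) ` (Inner R T \<times> R)"
    proof (cases "s = []")
      case True
      with \<open>k \<in> R\<close> show ?thesis by (simp add: t_eq)
    next
      case False
      with \<open>s \<in> T\<close> \<open>k \<in> R\<close> t have "(s, k) \<in> Inner R T \<times> R"
        by (auto simp: Inner_def t_eq)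
      then show ?thesis unfolding t_eq by (intro UnI2 image_eqI[of _ _ "(s, k)"]) simp_all
    qed
  qed
  have "[k] \<in> T" if "k \<in> R" for k
    using assms that unfolding expansion_subtree_def by blast
  moreover have "t @ [k] \<in> T" if "t \<in> Inner R T" "k \<in> R" for t k
    using assms that unfolding expansion_subtree_def Inner_def by blast
  ultimately show "(\<lambda>k. [k]) ` R \<union> (\<lambda>p. fst p @ [snd p]) ` (Inner R T \<times> R) \<subseteq> T - {[]}"
    by auto
qed

lemma train_count_leaves:
  assumes "rodset R" and T: "expansion_subtree R T"
  shows "train_count (Leaves R T - {[]}) n
       = rod_count R n + (\<Sum>i\<le>n. train_count (Inner R T) i * rod_count R (n - i))
         - train_count (Inner R T) n"
proof -
  let ?I = "Inner R T" and ?L = "Leaves R T - {[]}"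
  let ?roots = "(\<lambda>k. [k]) ` R" and ?extend = "(\<lambda>p. fst p @ [snd p]) ` (?I \<times> R)"
  have finite_fibre: "finite {t\<in>X. train_len t = m}" if "X \<subseteq> T - {[]}" for X m
    using that T unfolding expansion_subtree_def
    by (auto intro: finite_subset[OF _ finite_trains_of_len[OF assms(1), of m]])
  have parts: "?L \<subseteq> T - {[]}" "?I \<subseteq> T - {[]}" "?roots \<subseteq> T - {[]}" "?extend \<subseteq> T - {[]}"
    using expansion_subtree_nonroot_eq[OF T] by (auto simp: Leaves_def Inner_def)
  have "train_count (T - {[]}) n = train_count ?L n + train_count ?I n"
    unfolding nonroot_eq_leaves_Un_inner[of T R]
    using finite_fibre[OF parts(1)] finite_fibre[OF parts(2)] leaves_inner_disjoint
    by (rule graded_sum_Un)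
  moreover have "train_count (T - {[]}) n = train_count ?roots n + train_count ?extend n"
  proof -
    have "?roots \<inter> ?extend = {}" by (auto simp: Inner_def)
    then show ?thesis
      unfolding expansion_subtree_nonroot_eq[OF T]
      using finite_fibre[OF parts(3)] finite_fibre[OF parts(4)] by (intro graded_sum_Un)
  qed
  moreover have "train_count ?roots n = rod_count R n"
    by (subst graded_sum_image) (auto simp: inj_on_def o_def)
  moreover have "train_count ?extend n = (\<Sum>i\<le>n. train_count ?I i * rod_count R (n - i))"
  proof -
    have "inj_on (\<lambda>p. fst p @ [snd p]) (?I \<times> R)" by (auto simp: inj_on_def)
    then have "train_count ?extend n
        = graded_sum (\<lambda>p. train_len (fst p) + rlen (snd p)) (\<lambda>p. train_sign (fst p) * rsign (snd p)) (?I \<times> R) n"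
      by (simp add: graded_sum_image o_def)
    also have "\<dots> = (\<Sum>i\<le>n. train_count ?I i * rod_count R (n - i))"
      using finite_fibre[OF parts(2)] finite_rodset_fibre[OF assms(1)] by (rule graded_sum_Times)
    finally show ?thesis .
  qed
  ultimately show ?thesis by linarith
qed

lemma leaves_rod_equiv:
  assumes R: "rodset R" and Q: "rodset Q" and R': "rodset R'" and equiv_R: "R' \<equiv>\<^sub>r R"
    and T: "expansion_subtree R' T" and equiv_Q: "trains_rods (Inner R' T) \<equiv>\<^sub>r Q"
  shows "trains_rods (Leaves R' T) \<equiv>\<^sub>r runion R (runion (rbar Q) (rconcat Q R))"
proof -
  have trains: "X \<subseteq> T \<Longrightarrow> rodset (trains_rods X)" for X
    using T R' unfolding expansion_subtree_def by (blast intro: rodset_trains_rods)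
  have count_R': "rod_count R' m = rod_count R m" for m
    using rod_equiv_iff_rod_count R' R equiv_R by blast
  have "rodset (trains_rods (Inner R' T))" by (rule trains) (auto simp: Inner_def)
  then have "rod_count (trains_rods (Inner R' T)) m = rod_count Q m" for m
    using rod_equiv_iff_rod_count Q equiv_Q by blast
  moreover have "Inner R' T - {[]} = Inner R' T" by (auto simp: Inner_def)
  ultimately have count_inner: "train_count (Inner R' T) m = rod_count Q m" for m
    by (simp add: rod_count_trains_rods)
  have rodsets: "rodset (trains_rods (Leaves R' T))" "rodset (runion R (runion (rbar Q) (rconcat Q R)))"
    by (auto intro!: trains rodset_runion rodset_rbar rodset_rconcat R Q simp: Leaves_def)
  show ?thesis
    unfolding rod_equiv_iff_rod_count[OF rodsets]
    using train_count_leaves[OF R' T] count_R' count_inner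
    by (simp add: rod_count_trains_rods rod_count_runion rod_count_rbar rod_count_rconcat
        rodset_runion rodset_rbar rodset_rconcat R Q)
qed

definition rods_with_counts :: "(nat \<Rightarrow> nat) \<Rightarrow> (nat \<Rightarrow> int) \<Rightarrow> nat rod set" where
  "rods_with_counts col c = {(m, col i, sgn (c m)) | m i. 0 < m \<and> i < nat \<bar>c m\<bar>}"

lemma rodset_rods_with_counts: "rodset (rods_with_counts col c)"
proof -
  have "rods_with_counts col c
      = (\<lambda>(m, i). (m, col i, sgn (c m))) ` {(m, i). 0 < m \<and> i < nat \<bar>c m\<bar>}"
    unfolding rods_with_counts_def by auto
  also have "rodset \<dots>"
  proof (rule rodset_image)
    show "finite {p\<in>{(m, i). 0 < m \<and> i < nat \<bar>c m\<bar>}. rlen ((\<lambda>(m, i). (m, col i, sgn (c m))) p) = n}"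
      for n by (rule finite_subset[of _ "{n} \<times> {..<nat \<bar>c n\<bar>}"]) auto
  qed (auto simp: sgn_if split: if_split_asm)
  finally show ?thesis .
qed

lemma rod_count_rods_with_counts:
  assumes "inj col" and "0 < n"
  shows "rod_count (rods_with_counts col c) n = c n"
proof -
  have "{k\<in>rods_with_counts col c. rlen k = n} = (\<lambda>i. (n, col i, sgn (c n))) ` {..<nat \<bar>c n\<bar>}"
    using assms(2) unfolding rods_with_counts_def by auto
  moreover have "inj_on (\<lambda>i. (n, col i, sgn (c n))) {..<nat \<bar>c n\<bar>}"
    using assms(1) by (auto simp: inj_on_def inj_def)
  ultimately show ?thesis
    unfolding graded_sum_def by (simp add: sum.reindex card_image abs_mult_sgn)
qed

definition two_level_tree :: "'c rod set \<Rightarrow> 'c rod set \<Rightarrow> 'c rod list set" where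
  "two_level_tree R F = {[]} \<union> {[k] | k. k \<in> R} \<union> {[f, k] | f k. f \<in> F \<and> k \<in> R}"

lemma
  assumes "F \<subseteq> R"
  shows expansion_subtree_two_level_tree: "expansion_subtree R (two_level_tree R F)"
    and Inner_two_level_tree: "Inner R (two_level_tree R F) = (\<lambda>k. [k]) ` F"
  using assms unfolding expansion_subtree_def Inner_def two_level_tree_def
  by (auto simp: append_eq_Cons_conv) blast

lemma rod_count_trains_rods_singletons: "rod_count (trains_rods ((\<lambda>k. [k]) ` F)) n = rod_count F n"
  unfolding rod_count_trains_rods
  by (subst Diff_triv) (auto simp: graded_sum_image inj_on_def o_def)

lemma exists_expansion_subtree_inner_equiv:
  fixes R :: "'c rod set" and Q :: "'q rod set"
  assumes R: "rodset R" and Q: "rodset Q"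
  shows "\<exists>R' :: nat rod set. rodset R' \<and> R' \<equiv>\<^sub>r R \<and>
           (\<exists>T. expansion_subtree R' T \<and> trains_rods (Inner R' T) \<equiv>\<^sub>r Q)"
proof -
  \<comment> \<open>Even colours for \<open>R\<close>, odd ones for \<open>Q\<close>: the three families are disjoint.\<close>
  define P where "P = rods_with_counts (\<lambda>i. 2 * i) (rod_count R)"
  define F where "F = rods_with_counts (\<lambda>i. Suc (2 * i)) (rod_count Q)"
  define F' where "F' = rods_with_counts (\<lambda>i. Suc (2 * i)) (\<lambda>m. - rod_count Q m)"
  define R' where "R' = P \<union> F \<union> F'"
  have rodsets: "rodset P" "rodset F" "rodset F'"
    unfolding P_def F_def F'_def by (simp_all add: rodset_rods_with_counts)
  have inj: "inj (\<lambda>i::nat. 2 * i)" "inj (\<lambda>i::nat. Suc (2 * i))" by (auto simp: inj_def)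
  have "2 * i \<noteq> Suc (2 * j)" "Suc (2 * j) \<noteq> 2 * i" for i j :: nat by presburger+
  then have "P \<inter> (F \<union> F') = {}" "F \<inter> F' = {}"
    unfolding P_def F_def F'_def rods_with_counts_def by (auto simp: sgn_if)
  then have "rod_count R' n = rod_count P n + rod_count F n + rod_count F' n" for n
    unfolding R'_def Un_assoc using rodsets by (simp add: rod_count_Un rodset_Un)
  then have count_R': "rod_count R' n = rod_count R n" if "0 < n" for n
    unfolding P_def F_def F'_def using that by (simp add: rod_count_rods_with_counts inj)
  have count_F: "rod_count F n = rod_count Q n" if "0 < n" for n
    unfolding F_def using that by (simp add: rod_count_rods_with_counts inj)
  have rodset_R': "rodset R'" unfolding R'_def using rodsets by (simp add: rodset_Un)
  have "F \<subseteq> R'" unfolding R'_def by blast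
  then have "expansion_subtree R' (two_level_tree R' F)"
    and inner: "Inner R' (two_level_tree R' F) = (\<lambda>k. [k]) ` F"
    by (rule expansion_subtree_two_level_tree, rule Inner_two_level_tree)
  moreover have "trains_rods ((\<lambda>k. [k]) ` F) \<equiv>\<^sub>r Q"
  proof (rule rod_equivI)
    show "rodset (trains_rods ((\<lambda>k. [k]) ` F))"
      using rodsets(2) by (rule rodset_trains_rods) auto
  qed (use Q count_F in \<open>simp_all add: rod_count_trains_rods_singletons\<close>)
  moreover have "R' \<equiv>\<^sub>r R" using rodset_R' R count_R' by (rule rod_equivI)
  ultimately show ?thesis using rodset_R' by (metis inner)
qed

theorem mainTheorem5:
  fixes R :: "'c rod set" and Q :: "'q rod set"
  assumes "rodset R" and "rodset Q"
  shows "(\<exists>R' :: nat rod set. rodset R' \<and> R' \<equiv>\<^sub>r R \<and>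
            (\<exists>T. expansion_subtree R' T \<and> trains_rods (Inner R' T) \<equiv>\<^sub>r Q))
       \<and> (\<forall>(R' :: 'd rod set) T. rodset R' \<and> R' \<equiv>\<^sub>r R \<and> expansion_subtree R' T
            \<and> trains_rods (Inner R' T) \<equiv>\<^sub>r Q
            \<longrightarrow> trains_rods (Leaves R' T) \<equiv>\<^sub>r runion R (runion (rbar Q) (rconcat Q R)))"
  using exists_expansion_subtree_inner_equiv[OF assms] leaves_rod_equiv[OF assms] by blast

end
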